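(* If $x\in S_n$ avoids both $123$ and the bivincular pattern $132^{\star}$, then $x\in\mathrm{Sort}_n(132,321)$.
   Context: An occurrence of the bivincular pattern $132^{\star}$ in $x=x_1\cdots x_n$ is a pair of indices $a<b<n$ with $x_a<x_{b+1}$ and $x_b=x_{b+1}+1$. A permutation contains a classical pattern $p$ if it has a subsequence order-isomorphic to $p$. For a set $T$ of patterns, the map $s_T$ is defined as follows: the entries of the input permutation are read from left to right, with an initially empty stack. At each step, if the input is nonempty and pushing the next input entry onto the stack produces a stack whose contents, read from top to bottom, avoid every pattern in $T$, that entry is pushed; otherwise the top entry of the stack is popped and appended to the output. When the input is exhausted, the remaining stack entries are popped one at a time to the output. Write $s_{\sigma,\tau}=s_{\{\sigma,\tau\}}$ and $s=s_{\{21\}}$ (West's stack-sorting map). $\mathrm{Sort}_n(\sigma,\tau)$ is the set of $x\in S_n$ with $s(s_{\sigma,\tau}(x))=12\cdots n$. *)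

theory Defs
  imports Main
begin

text \<open>Permutations are lists of naturals; x is in S_n iff it is an arrangement of 1..n.
  Positions are 0-based in Isabelle (x ! i is the paper's x_(i+1)).\<close>

definition perm_of :: "nat \<Rightarrow> nat list \<Rightarrow> bool" where
  "perm_of n x \<longleftrightarrow> distinct x \<and> set x = {1..n}"

definition order_iso :: "nat list \<Rightarrow> nat list \<Rightarrow> bool" where
  "order_iso a b \<longleftrightarrow> length a = length b \<and>
     (\<forall>i<length a. \<forall>j<length a. a ! i < a ! j \<longleftrightarrow> b ! i < b ! j)"

definition contains :: "nat list \<Rightarrow> nat list \<Rightarrow> bool" where
  "contains x p \<longleftrightarrow> (\<exists>I. I \<subseteq> {..<length x} \<and> order_iso (nths x I) p)"

definition avoids :: "nat list \<Rightarrow> nat list \<Rightarrow> bool" where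
  "avoids x p \<longleftrightarrow> \<not> contains x p"

text \<open>Occurrence of the bivincular pattern 132-star: 1-based indices a<b<n with
  x_a < x_(b+1) and x_b = x_(b+1)+1; translated to 0-based indices.\<close>
definition contains_132star :: "nat list \<Rightarrow> bool" where
  "contains_132star x \<longleftrightarrow> (\<exists>a b. a < b \<and> b + 1 < length x \<and>
      x ! a < x ! (b + 1) \<and> x ! b = x ! (b + 1) + 1)"

text \<open>The stack is a list whose head is the top, so the list itself is the
  stack contents read from top to bottom.\<close>
definition stack_ok :: "nat list set \<Rightarrow> nat list \<Rightarrow> bool" where
  "stack_ok T stk \<longleftrightarrow> (\<forall>p\<in>T. avoids stk p)"

text \<open>stack_run T inp stk = output produced from the current state.  The case of a
  rejected push onto an empty stack cannot occur when all patterns in T have length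
  at least 2; there we simply push.\<close>
fun stack_run :: "nat list set \<Rightarrow> nat list \<Rightarrow> nat list \<Rightarrow> nat list" where
  "stack_run T [] stk = stk"
| "stack_run T (a # inp) [] = stack_run T inp [a]"
| "stack_run T (a # inp) (b # stk) =
     (if stack_ok T (a # b # stk) then stack_run T inp (a # b # stk)
      else b # stack_run T (a # inp) stk)"

definition s_T :: "nat list set \<Rightarrow> nat list \<Rightarrow> nat list" where
  "s_T T x = stack_run T x []"

definition s_pair :: "nat list \<Rightarrow> nat list \<Rightarrow> nat list \<Rightarrow> nat list" where
  "s_pair \<sigma> \<tau> = s_T {\<sigma>, \<tau>}"

definition west_s :: "nat list \<Rightarrow> nat list" where
  "west_s = s_T {[2, 1]}"

definition Sort :: "nat \<Rightarrow> nat list \<Rightarrow> nat list \<Rightarrow> nat list set" where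
  "Sort n \<sigma> \<tau> = {x. perm_of n x \<and> west_s (s_pair \<sigma> \<tau> x) = [1..<n+1]}"

end

theory Submission
  imports Defs "HOL-Library.Sublist" "HOL-Library.Multiset"
begin

text \<open>Under the hypotheses, the stack of the (132,321)-machine holds, after k entries have
  been read, exactly the left-to-right minima among them; every other entry is pushed and
  popped again as soon as the next entry arrives, because one of the minima below it
  completes a 321 or, using the absence of 123 and 132-star, a 132.  Hence the machine
  outputs the entries that are not left-to-right minima, in their original order, followed
  by the left-to-right minima in increasing order.  Avoiding 123 makes the first part
  decreasing, and West's stack sorts any decreasing sequence followed by an increasing one.\<close>

section \<open>Pattern containment\<close>

lemma order_iso_Nil [simp]: "order_iso [] []"
  by (simp add: order_iso_def)

lemma order_iso_Cons_Cons:
  "order_iso (a # as) (p # ps) \<longleftrightarrow> order_iso as ps \<and>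
     list_all2 (\<lambda>b q. (a < b \<longleftrightarrow> p < q) \<and> (b < a \<longleftrightarrow> q < p)) as ps"
  unfolding order_iso_def list_all2_conv_all_nth by (auto simp: All_less_Suc2)

lemma order_iso_length3:
  assumes "order_iso q [p1, p2, p3]"
  obtains u v w where "q = [u, v, w]"
  using assms by (auto simp: order_iso_def length_Suc_conv)

lemma order_iso_length2:
  assumes "order_iso q [p1, p2]"
  obtains u v where "q = [u, v]"
  using assms by (auto simp: order_iso_def length_Suc_conv)

lemma nths_restrict_length: "nths xs (N \<inter> {..<length xs}) = nths xs N"
  unfolding nths_def
  by (rule arg_cong[where f="map fst"], rule filter_cong) (auto dest: set_zip_rightD)

lemma contains_iff_subseq: "contains x p \<longleftrightarrow> (\<exists>q. subseq q x \<and> order_iso q p)"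
proof
  assume "contains x p"
  then obtain I where "order_iso (nths x I) p"
    unfolding contains_def by blast
  moreover have "subseq (nths x I) x"
    by (auto simp: subseq_conv_nths)
  ultimately show "\<exists>q. subseq q x \<and> order_iso q p"
    by blast
next
  assume "\<exists>q. subseq q x \<and> order_iso q p"
  then obtain N where "order_iso (nths x N) p"
    by (auto simp: subseq_conv_nths)
  then have "order_iso (nths x (N \<inter> {..<length x})) p"
    by (simp add: nths_restrict_length)
  then show "contains x p"
    unfolding contains_def by (intro exI[of _ "N \<inter> {..<length x}"]) simp
qed

lemma subseq_sorted: "subseq xs ys \<Longrightarrow> sorted ys \<Longrightarrow> sorted xs"
  by (auto simp: subseq_conv_nths sorted_nths)

lemma subseq_map_nth:
  assumes "sorted_wrt (<) is" and "set is \<subseteq> {..<length xs}"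
  shows "subseq (map ((!) xs) is) xs"
proof -
  have "subseq is [0..<length xs]"
    using assms by (intro sorted_subset_imp_subseq) auto
  then have "subseq (map ((!) xs) is) (map ((!) xs) [0..<length xs])"
    by (rule subseq_map)
  then show ?thesis
    by (simp add: map_nth)
qed

lemma contains_at_indices:
  assumes "sorted_wrt (<) is" and "set is \<subseteq> {..<length xs}"
    and "order_iso (map ((!) xs) is) p"
  shows "contains xs p"
  unfolding contains_iff_subseq using assms subseq_map_nth by blast

lemma avoids_21_iff_sorted: "avoids xs [2, 1] \<longleftrightarrow> sorted xs"
proof
  assume avoid: "avoids xs [2, 1]"
  show "sorted xs"
    unfolding sorted_iff_nth_mono_less
  proof (intro allI impI)
    fix i j
    assume "i < j" "j < length xs"
    show "xs ! i \<le> xs ! j"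
    proof (rule ccontr)
      assume "\<not> xs ! i \<le> xs ! j"
      then have "order_iso (map ((!) xs) [i, j]) [2, 1]"
        by (simp add: order_iso_Cons_Cons)
      then have "contains xs [2, 1]"
        using contains_at_indices[of "[i, j]" xs] \<open>i < j\<close> \<open>j < length xs\<close> by simp
      then show False
        using avoid by (simp add: avoids_def)
    qed
  qed
next
  assume "sorted xs"
  show "avoids xs [2, 1]"
    unfolding avoids_def contains_iff_subseq
  proof
    assume "\<exists>q. subseq q xs \<and> order_iso q [2, 1]"
    then obtain u v where "subseq [u, v] xs" and iso: "order_iso [u, v] [2, 1]"
      by (metis order_iso_length2)
    then have "sorted [u, v]"
      using subseq_sorted \<open>sorted xs\<close> by blast
    then show False
      using iso by (simp add: order_iso_Cons_Cons)
  qed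
qed

lemma not_contains_Cons_sorted:
  fixes p1 p2 p3 :: nat
  assumes "sorted L" and "p3 < p2"
  shows "\<not> contains (a # L) [p1, p2, p3]"
proof
  assume "contains (a # L) [p1, p2, p3]"
  then obtain u v w where sub: "subseq [u, v, w] (a # L)"
    and iso: "order_iso [u, v, w] [p1, p2, p3]"
    unfolding contains_iff_subseq by (metis order_iso_length3)
  have "w < v"
    using iso \<open>p3 < p2\<close> by (simp add: order_iso_Cons_Cons)
  moreover have "subseq [v, w] L"
    using sub by (auto split: if_splits dest: subseq_Cons')
  then have "sorted [v, w]"
    using subseq_sorted \<open>sorted L\<close> by blast
  ultimately show False
    by simp
qed

lemma contains_Cons_Cons_mem:
  assumes "s \<in> set S" and "order_iso [a, t, s] p"
  shows "contains (a # t # S) p"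
  unfolding contains_iff_subseq
  by (intro exI[of _ "[a, t, s]"]) (simp add: assms subseq_singleton_left)

lemma contains_123_at:
  "h < i \<Longrightarrow> i < j \<Longrightarrow> j < length x \<Longrightarrow> x ! h < x ! i \<Longrightarrow> x ! i < x ! j \<Longrightarrow>
   contains x [1, 2, 3]"
  using contains_at_indices[of "[h, i, j]" x "[1, 2, 3]"]
  by (simp add: order_iso_Cons_Cons)

section \<open>Stack machines\<close>

lemma mset_stack_run: "mset (stack_run T inp stk) = mset inp + mset stk"
  by (induction T inp stk rule: stack_run.induct) auto

lemma set_stack_run: "set (stack_run T inp stk) = set inp \<union> set stk"
  by (metis mset_stack_run set_mset_mset set_mset_union)

lemma perm_of_s_T: "perm_of n x \<Longrightarrow> perm_of n (s_T T x)"
  unfolding perm_of_def s_T_def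
  by (metis add.right_neutral mset.simps(1) mset_eq_imp_distinct_iff mset_eq_setD
      mset_stack_run)

lemma sorted_perm_of_eq_upt:
  assumes "perm_of n y" and "sorted y"
  shows "y = [1..<n + 1]"
proof (rule sorted_distinct_set_unique)
  show "set y = set [1..<n + 1]"
    using assms(1) by (simp add: perm_of_def atLeastLessThanSuc_atLeastAtMost del: upt_Suc)
qed (use assms in \<open>simp_all add: perm_of_def del: upt_Suc\<close>)

lemma stack_run_push:
  "stack_ok T (a # stk) \<Longrightarrow> stack_run T (a # inp) stk = stack_run T inp (a # stk)"
  by (cases stk) auto

lemma stack_ok_21_iff_sorted: "stack_ok {[2, 1]} stk \<longleftrightarrow> sorted stk"
  by (simp add: stack_ok_def avoids_21_iff_sorted del: One_nat_def)

lemma sorted_stack_run_21: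
  "sorted stk \<Longrightarrow> sorted inp \<Longrightarrow> sorted (stack_run {[2, 1]} inp stk)"
proof (induction "{[2::nat, 1]}" inp stk rule: stack_run.induct)
  case (1 stk)
  then show ?case by simp
next
  case (2 a inp)
  then show ?case by simp
next
  case (3 a inp b stk)
  show ?case
  proof (cases "sorted (a # b # stk)")
    case True
    then show ?thesis
      using 3 by (simp add: stack_ok_21_iff_sorted del: One_nat_def)
  next
    case False
    then have "b < a"
      using \<open>sorted (b # stk)\<close> by auto
    then have "\<forall>z \<in> set (stack_run {[2, 1]} (a # inp) stk). b \<le> z"
      using 3(3,4) by (auto simp: set_stack_run)
    then show ?thesis
      using 3 False by (simp add: stack_ok_21_iff_sorted del: One_nat_def)
  qed
qed

lemma stack_run_21_push_all:
  "sorted (rev D @ stk) \<Longrightarrow>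
   stack_run {[2, 1]} (D @ inp) stk = stack_run {[2, 1]} inp (rev D @ stk)"
proof (induction D arbitrary: stk)
  case Nil
  then show ?case by simp
next
  case (Cons d D)
  then have "stack_run {[2, 1]} (d # D @ inp) stk = stack_run {[2, 1]} (D @ inp) (d # stk)"
    by (intro stack_run_push) (simp add: stack_ok_21_iff_sorted sorted_append del: One_nat_def)
  then show ?case
    using Cons by simp
qed

lemma sorted_west_s_dec_inc:
  assumes "sorted (rev D)" and "sorted I"
  shows "sorted (west_s (D @ I))"
  using stack_run_21_push_all[of D "[]" I] sorted_stack_run_21[of "rev D" I] assms
  by (simp add: west_s_def s_T_def)

lemma stack_ok_132_321_sorted: "sorted stk \<Longrightarrow> stack_ok {[1, 3, 2], [3, 2, 1]} (a # stk)"
  by (simp add: stack_ok_def avoids_def not_contains_Cons_sorted)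

section \<open>Left-to-right minima\<close>

definition ltr_min :: "nat list \<Rightarrow> nat \<Rightarrow> bool" where
  "ltr_min x i \<longleftrightarrow> (\<forall>j<i. x ! i < x ! j)"

definition ltr_min_stack :: "nat list \<Rightarrow> nat \<Rightarrow> nat list" where
  "ltr_min_stack x k = rev (map ((!) x) (filter (ltr_min x) [0..<k]))"

definition nonmins_then_mins :: "nat list \<Rightarrow> nat \<Rightarrow> nat list" where
  "nonmins_then_mins x k =
     map ((!) x) (filter (\<lambda>i. \<not> ltr_min x i) [k..<length x]) @ ltr_min_stack x (length x)"

lemma ltr_min_0 [simp]: "ltr_min x 0"
  by (simp add: ltr_min_def)

lemma ltr_min_stack_0 [simp]: "ltr_min_stack x 0 = []"
  by (simp add: ltr_min_stack_def)

lemma ltr_min_stack_Suc: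
  "ltr_min_stack x (Suc k) = (if ltr_min x k then x ! k # ltr_min_stack x k else ltr_min_stack x k)"
  by (simp add: ltr_min_stack_def)

lemma set_ltr_min_stack: "set (ltr_min_stack x k) = {x ! i | i. i < k \<and> ltr_min x i}"
  by (auto simp: ltr_min_stack_def)

lemma nth_in_ltr_min_stack: "i < k \<Longrightarrow> ltr_min x i \<Longrightarrow> x ! i \<in> set (ltr_min_stack x k)"
  by (auto simp: set_ltr_min_stack)

lemma sorted_ltr_min_stack: "sorted (ltr_min_stack x k)"
proof (induction k)
  case 0
  then show ?case by simp
next
  case (Suc k)
  have "\<forall>z \<in> set (ltr_min_stack x k). x ! k \<le> z" if "ltr_min x k"
    using that by (auto simp: set_ltr_min_stack ltr_min_def less_imp_le)
  then show ?case
    using Suc by (simp add: ltr_min_stack_Suc)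
qed

lemma nonmins_then_mins_length: "nonmins_then_mins x (length x) = ltr_min_stack x (length x)"
  by (simp add: nonmins_then_mins_def)

lemma nonmins_then_mins_step:
  "k < length x \<Longrightarrow> nonmins_then_mins x k =
     (if ltr_min x k then nonmins_then_mins x (Suc k) else x ! k # nonmins_then_mins x (Suc k))"
  by (simp add: nonmins_then_mins_def upt_conv_Cons)

lemma ltr_min_le_nth: "\<exists>i\<le>j. ltr_min x i \<and> x ! i \<le> x ! j"
proof (induction j rule: less_induct)
  case (less j)
  show ?case
  proof (cases "ltr_min x j")
    case True
    then show ?thesis by blast
  next
    case False
    then obtain j' where "j' < j" "x ! j' \<le> x ! j"
      unfolding ltr_min_def by auto
    then show ?thesis
      using less[of j'] by (meson le_trans less_imp_le)
  qed
qed

lemma not_ltr_min_imp_less: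
  assumes "distinct x" and "i < length x" and "\<not> ltr_min x i"
  obtains h where "h < i" and "x ! h < x ! i"
proof -
  obtain h where h: "h < i" "x ! h \<le> x ! i"
    using assms(3) unfolding ltr_min_def by auto
  then have "x ! h \<noteq> x ! i"
    using assms(1,2) by (simp add: nth_eq_iff_index_eq)
  then show ?thesis
    using h that by simp
qed

lemma non_ltr_mins_decreasing:
  assumes "distinct x" and "avoids x [1, 2, 3]"
    and "i < j" and "j < length x" and "\<not> ltr_min x i" and "\<not> ltr_min x j"
  shows "x ! j < x ! i"
proof -
  obtain h where "h < i" "x ! h < x ! i"
    using not_ltr_min_imp_less assms by (metis order.strict_trans)
  then have "\<not> x ! i < x ! j"
    using assms(2-4) contains_123_at by (auto simp: avoids_def)
  moreover have "x ! i \<noteq> x ! j"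
    using assms(1,3,4) by (simp add: nth_eq_iff_index_eq)
  ultimately show ?thesis
    by simp
qed

lemma sorted_rev_non_ltr_mins:
  assumes "distinct x" and "avoids x [1, 2, 3]"
  shows "sorted (rev (map ((!) x) (filter (\<lambda>i. \<not> ltr_min x i) [k..<length x])))"
proof -
  have "sorted_wrt (<) (filter (\<lambda>i. \<not> ltr_min x i) [k..<length x])"
    by (simp add: sorted_wrt_filter)
  then have "sorted_wrt (\<lambda>i j. x ! j \<le> x ! i) (filter (\<lambda>i. \<not> ltr_min x i) [k..<length x])"
    by (rule sorted_wrt_mono_rel[rotated])
      (auto intro: less_imp_le non_ltr_mins_decreasing[OF assms])
  then show ?thesis
    by (simp add: sorted_wrt_rev sorted_wrt_map)
qed

text \<open>The absence of 132-star is used only here: the value x ! Suc k + 1 cannot sit at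
  position k.\<close>
lemma successor_value_ltr_min:
  assumes perm: "perm_of n x" and no123: "avoids x [1, 2, 3]" and "\<not> contains_132star x"
    and k: "Suc k < length x" and "\<not> ltr_min x k" and "\<not> ltr_min x (Suc k)"
    and desc: "x ! Suc k < x ! k"
  obtains p where "p < k" and "ltr_min x p" and "x ! p = x ! Suc k + 1" and "x ! p < x ! k"
proof -
  have dist: "distinct x"
    using perm by (simp add: perm_of_def)
  obtain j where j: "j < Suc k" "x ! j < x ! Suc k"
    using not_ltr_min_imp_less[OF dist k \<open>\<not> ltr_min x (Suc k)\<close>] by blast
  have "j < k"
    using j desc by (metis less_SucE order.asym)
  have no_star: "x ! k \<noteq> x ! Suc k + 1"
    using \<open>\<not> contains_132star x\<close> \<open>j < k\<close> j(2) k
    unfolding contains_132star_def by (metis Suc_eq_plus1)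
  have "x ! k \<in> {1..n}"
    using perm k by (auto simp: perm_of_def)
  then have "x ! Suc k + 1 \<in> set x"
    using perm desc by (auto simp: perm_of_def)
  then obtain p where p: "p < length x" "x ! p = x ! Suc k + 1"
    by (metis in_set_conv_nth)
  have "\<not> Suc k < p"
    using contains_123_at[of j "Suc k" p x] j p no123 by (auto simp: avoids_def)
  moreover have "p \<noteq> Suc k" and "p \<noteq> k"
    using p no_star by auto
  ultimately have "p < k"
    by simp
  moreover have "x ! p < x ! k"
    using p no_star desc by simp
  moreover from calculation have "ltr_min x p"
    using non_ltr_mins_decreasing[OF dist no123] \<open>\<not> ltr_min x k\<close> k by fastforce
  ultimately show ?thesis
    using that p by blast
qed

lemma ltr_min_between:
  assumes perm: "perm_of n x" and "avoids x [1, 2, 3]" and "\<not> contains_132star x"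
    and k: "Suc k < length x" and "\<not> ltr_min x k" and desc: "x ! Suc k < x ! k"
  obtains i where "i < k" and "ltr_min x i" and "x ! Suc k < x ! i" and "x ! i < x ! k"
proof (cases "ltr_min x (Suc k)")
  case True
  have dist: "distinct x"
    using perm by (simp add: perm_of_def)
  obtain j where j: "j < k" "x ! j < x ! k"
    using not_ltr_min_imp_less[OF dist _ \<open>\<not> ltr_min x k\<close>] k by auto
  obtain i where i: "i \<le> j" "ltr_min x i" "x ! i \<le> x ! j"
    using ltr_min_le_nth by blast
  have "i < k" and "x ! i < x ! k"
    using i j by auto
  moreover have "x ! Suc k < x ! i"
    using True \<open>i < k\<close> unfolding ltr_min_def by simp
  ultimately show ?thesis
    using that i by blast
next
  case False
  obtain p where "p < k" "ltr_min x p" "x ! p = x ! Suc k + 1" "x ! p < x ! k"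
    using successor_value_ltr_min[OF assms(1-5) False desc] .
  then show ?thesis
    by (intro that[of p]) simp_all
qed

lemma not_stack_ok_after_non_ltr_min:
  assumes perm: "perm_of n x" and "avoids x [1, 2, 3]" and "\<not> contains_132star x"
    and k: "Suc k < length x" and non_min: "\<not> ltr_min x k"
  shows "\<not> stack_ok {[1, 3, 2], [3, 2, 1]} (x ! Suc k # x ! k # ltr_min_stack x (Suc k))"
proof -
  have dist: "distinct x"
    using perm by (simp add: perm_of_def)
  have "x ! Suc k \<noteq> x ! k"
    using dist k by (simp add: nth_eq_iff_index_eq)
  then consider "x ! Suc k < x ! k" | "x ! k < x ! Suc k"
    by linarith
  then obtain s p where "s \<in> set (ltr_min_stack x (Suc k))" "p \<in> {[1, 3, 2], [3, 2, 1]}"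
    and "order_iso [x ! Suc k, x ! k, s] p"
  proof cases
    case 1
    then obtain i where "i < k" "ltr_min x i" "x ! Suc k < x ! i" "x ! i < x ! k"
      using ltr_min_between assms by blast
    then show ?thesis
      by (intro that[of "x ! i" "[1, 3, 2]"] nth_in_ltr_min_stack) (auto simp: order_iso_Cons_Cons)
  next
    case 2
    obtain j where j: "j < k" "x ! j < x ! k"
      using not_ltr_min_imp_less[OF dist _ non_min] k by auto
    obtain i where "i \<le> j" "ltr_min x i" "x ! i \<le> x ! j"
      using ltr_min_le_nth by blast
    then show ?thesis
      using j 2
      by (intro that[of "x ! i" "[3, 2, 1]"] nth_in_ltr_min_stack) (auto simp: order_iso_Cons_Cons)
  qed
  then show ?thesis
    unfolding stack_ok_def avoids_def using contains_Cons_Cons_mem by blast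
qed

lemma stack_run_132_321_pop_non_ltr_min:
  assumes "perm_of n x" and "avoids x [1, 2, 3]" and "\<not> contains_132star x"
    and "Suc k \<le> length x" and "\<not> ltr_min x k"
  shows "stack_run {[1, 3, 2], [3, 2, 1]} (drop (Suc k) x) (x ! k # ltr_min_stack x (Suc k)) =
         x ! k # stack_run {[1, 3, 2], [3, 2, 1]} (drop (Suc k) x) (ltr_min_stack x (Suc k))"
proof (cases "Suc k = length x")
  case True
  then show ?thesis
    by simp
next
  case False
  then have "Suc k < length x"
    using assms(4) by simp
  then have "drop (Suc k) x = x ! Suc k # drop (Suc (Suc k)) x"
    by (simp add: Cons_nth_drop_Suc)
  moreover have "\<not> stack_ok {[1, 3, 2], [3, 2, 1]} (x ! Suc k # x ! k # ltr_min_stack x (Suc k))"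
    using not_stack_ok_after_non_ltr_min[OF assms(1-3) \<open>Suc k < length x\<close> assms(5)] .
  ultimately show ?thesis
    by simp
qed

lemma stack_run_132_321_ltr_min_stack:
  assumes "perm_of n x" and "avoids x [1, 2, 3]" and "\<not> contains_132star x"
    and "k \<le> length x"
  shows "stack_run {[1, 3, 2], [3, 2, 1]} (drop k x) (ltr_min_stack x k) = nonmins_then_mins x k"
  using \<open>k \<le> length x\<close>
proof (induction k rule: inc_induct)
  case base
  then show ?case
    by (simp add: nonmins_then_mins_length)
next
  case (step k)
  let ?T = "{[1, 3, 2], [3, 2, 1]}"
  have drop_k: "drop k x = x ! k # drop (Suc k) x"
    using step.hyps by (simp add: Cons_nth_drop_Suc)
  have "stack_run ?T (drop k x) (ltr_min_stack x k) =
        stack_run ?T (drop (Suc k) x) (x ! k # ltr_min_stack x k)"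
    unfolding drop_k by (intro stack_run_push stack_ok_132_321_sorted sorted_ltr_min_stack)
  also have "\<dots> = nonmins_then_mins x k"
  proof (cases "ltr_min x k")
    case True
    then show ?thesis
      using step by (simp add: ltr_min_stack_Suc nonmins_then_mins_step)
  next
    case False
    then show ?thesis
      using stack_run_132_321_pop_non_ltr_min[OF assms(1-3) _ False] step
      by (simp add: ltr_min_stack_Suc nonmins_then_mins_step)
  qed
  finally show ?case .
qed

theorem proposition3p6:
  fixes n :: nat and x :: "nat list"
  assumes "perm_of n x"
    and "avoids x [1, 2, 3]"
    and "\<not> contains_132star x"
  shows "x \<in> Sort n [1, 3, 2] [3, 2, 1]"
proof -
  have dist: "distinct x"
    using assms(1) by (simp add: perm_of_def)
  have s_pair_eq: "s_pair [1, 3, 2] [3, 2, 1] x = nonmins_then_mins x 0"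
    using stack_run_132_321_ltr_min_stack[OF assms, of 0] by (simp add: s_pair_def s_T_def)
  have "perm_of n (west_s (s_pair [1, 3, 2] [3, 2, 1] x))"
    unfolding west_s_def s_pair_def by (intro perm_of_s_T assms(1))
  moreover have "sorted (west_s (s_pair [1, 3, 2] [3, 2, 1] x))"
    unfolding s_pair_eq nonmins_then_mins_def
    by (intro sorted_west_s_dec_inc sorted_rev_non_ltr_mins[OF dist assms(2)] sorted_ltr_min_stack)
  ultimately have "west_s (s_pair [1, 3, 2] [3, 2, 1] x) = [1..<n + 1]"
    by (rule sorted_perm_of_eq_upt)
  then show ?thesis
    using assms(1) unfolding Sort_def by blast
qed

end
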